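(* Let $S$ be a nondegenerate simplex in $\mathbb R^n$ with $S\subset Q_n\subset nS$, with vertices $x^{(1)},\dots,x^{(n+1)}$, and let $\lambda_j(x)=l_{1j}x_1+\dots+l_{nj}x_n+l_{n+1,j}$ ($1\le j\le n+1$) be its basic Lagrange polynomials. Then: (i) $\max_{x\in\mathrm{ver}(Q_n)}\lambda_j(x)=1$ for all $j=1,\dots,n+1$; (ii) $\max_{x\in\mathrm{ver}(Q_n)}(-\lambda_j(x))=\frac{n-1}{n+1}$ for all $j=1,\dots,n+1$; (iii) the same equalities as in (i) and (ii) hold with maxima taken over $x\in Q_n$; (iv) $c(S)=c(Q_n)=(\tfrac12,\dots,\tfrac12)$; (v) for every integer $k\ge0$, $\frac{1}{n^{k+1}}Q_n\subset\frac1{n^k}S\subset\frac1{n^k}Q_n$ and $n^kS\subset n^kQ_n\subset n^{k+1}S$, i.e. $\dots\subset\frac1{n^2}S\subset\frac1nQ_n\subset S\subset Q_n\subset nS\subset n^2Q_n\subset n^3S\subset\dots$; (vi) $\sum_{j=1}^{n+1}|l_{ij}|=2$ for $1\le i\le n$, and $\sum_{i=1}^{n}|l_{ij}|=\frac{2n}{n+1}$ for $1\le j\le n+1$; (vii) for $1\le j\le n+1$: $\sum_{i\le n,\ l_{ij}\ge0}l_{ij}=1-l_{n+1,j}$ and $\sum_{i\le n,\ l_{ij}<0}|l_{ij}|=\frac{n-1}{n+1}+l_{n+1,j}$; (viii) $Q_n\subset\bigcap_{j=1}^{n+1}D_j$, where $D_j=\{x\in\mathbb R^n: -\frac{n-1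}{n+1}\le\lambda_j(x)\le1\}$.
   Context: $Q_n=[0,1]^n$. For a convex body $\Omega$ and $\sigma>0$, $\sigma\Omega$ denotes the homothetic image of $\Omega$ with center at the center of gravity $c(\Omega)$ of $\Omega$ and ratio $\sigma$. For a nondegenerate simplex $S$ with vertices $x^{(j)}=(x^{(j)}_1,\dots,x^{(j)}_n)$, $1\le j\le n+1$, the vertex matrix $A$ is the $(n+1)\times(n+1)$ matrix whose $j$th row is $(x^{(j)}_1,\dots,x^{(j)}_n,1)$; writing $A^{-1}=(l_{ij})$, the basic Lagrange polynomials are $\lambda_j(x)=l_{1j}x_1+\dots+l_{nj}x_n+l_{n+1,j}$; they satisfy $\lambda_j(x^{(k)})=\delta_{jk}$. *)

theory Defs
  imports "HOL-Analysis.Analysis"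
begin

definition unit_cube :: "(real^'n) set" where
  "unit_cube = cbox 0 1"

definition cube_vertices :: "(real^'n) set" where
  "cube_vertices = {x. \<forall>i. x $ i = 0 \<or> x $ i = 1}"

definition center_of_gravity :: "(real^'n) set \<Rightarrow> real^'n" where
  "center_of_gravity \<Omega> = (1 / measure lebesgue \<Omega>) *\<^sub>R integral \<Omega> (\<lambda>x. x)"

definition homot :: "real \<Rightarrow> (real^'n) set \<Rightarrow> (real^'n) set" where
  "homot \<sigma> \<Omega> = (\<lambda>y. center_of_gravity \<Omega> + \<sigma> *\<^sub>R (y - center_of_gravity \<Omega>)) ` \<Omega>"

text \<open>Vertices are indexed by the type 'n option (n+1 elements); the coordinate
  columns of the vertex matrix are indexed by Some i, the last column (all ones) by None.\<close>
definition vertex_matrix :: "('n option \<Rightarrow> real^'n) \<Rightarrow> real^('n option)^('n option)" where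
  "vertex_matrix x = (\<chi> j k. case k of Some i \<Rightarrow> x j $ i | None \<Rightarrow> 1)"

text \<open>Coefficient l_{ij} of the inverse vertex matrix; row index Some i (i-th coordinate)
  or None (the (n+1)-st row), column index j (vertex).\<close>
definition lcoef :: "('n option \<Rightarrow> real^'n) \<Rightarrow> 'n option \<Rightarrow> 'n option \<Rightarrow> real" where
  "lcoef x i j = matrix_inv (vertex_matrix x) $ i $ j"

definition lagrange :: "('n option \<Rightarrow> real^'n) \<Rightarrow> 'n option \<Rightarrow> real^'n \<Rightarrow> real" where
  "lagrange x j y = (\<Sum>i\<in>UNIV. lcoef x (Some i) j * y $ i) + lcoef x None j"

definition simplex_of :: "('n option \<Rightarrow> real^'n) \<Rightarrow> (real^'n) set" where
  "simplex_of x = convex hull (range x)"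

end

theory Submission
  imports Defs
begin

text \<open>Each \<open>\<lambda>_j\<close> is affine, so on the cube its maximum is \<open>p_j + l_{n+1,j}\<close> and its
  minimum is \<open>l_{n+1,j} - q_j\<close>, both attained at vertices, where \<open>p_j\<close> and \<open>q_j\<close> are the
  sums of the positive and negative parts of \<open>l_{1j}, ..., l_{nj}\<close>. The centroid of \<open>S\<close> has
  all barycentric coordinates \<open>1/(n+1)\<close> (by self-similarity of \<open>S\<close> under homotheties towards
  a vertex), so \<open>Q \<subseteq> nS\<close> gives \<open>\<lambda>_j \<ge> -(n-1)/(n+1)\<close> on \<open>Q\<close>, i.e. \<open>q_j - l_{n+1,j} \<le> (n-1)/(n+1)\<close>,
  while \<open>x_j \<in> Q\<close> gives \<open>p_j + l_{n+1,j} \<ge> 1\<close>. Each of the first \<open>n\<close> rows of the inverse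
  vertex matrix sums to \<open>0\<close> and has positive part at least \<open>1\<close>, because
  \<open>\<Sum>_j l_{ij} (x_j)_i = 1\<close> with \<open>0 \<le> (x_j)_i \<le> 1\<close>. Summing the column bounds over \<open>j\<close> and the
  row bounds over \<open>i\<close> counts the same quantities, so all these inequalities are equalities;
  the remaining claims follow, in particular \<open>c(S) = (1/2, ..., 1/2)\<close> because
  \<open>\<lambda>_j(1/2, ..., 1/2) = (p_j - q_j)/2 + l_{n+1,j} = 1/(n+1)\<close>.\<close>

section \<open>Barycentric coordinates of a simplex\<close>

lemma sum_UNIV_option:
  "(\<Sum>k\<in>(UNIV::'a::finite option set). f k) = f None + (\<Sum>i\<in>UNIV. f (Some i))"
  by (simp add: UNIV_option_conv sum.reindex)

lemma sum_sum_mult_swap: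
  "(\<Sum>j\<in>B. \<Sum>i\<in>A. (f i j :: real) * y i) = (\<Sum>i\<in>A. y i * (\<Sum>j\<in>B. f i j))"
  by (subst sum.swap) (simp add: sum_distrib_left mult.commute)

lemma card_UNIV_option: "CARD('a::finite option) = Suc CARD('a)"
  by (simp add: UNIV_option_conv card_image)

lemma lagrange_eq_inner: "lagrange x j y = (\<chi> i. lcoef x (Some i) j) \<bullet> y + lcoef x None j"
  by (simp add: lagrange_def inner_vec_def)

lemma lagrange_affine:
  "u + v = 1 \<Longrightarrow> lagrange x j (u *\<^sub>R y + v *\<^sub>R z) = u * lagrange x j y + v * lagrange x j z"
proof -
  assume "u + v = 1"
  then have "lcoef x None j = u * lcoef x None j + v * lcoef x None j"
    by (metis distrib_right mult_1)
  then show ?thesis by (simp add: lagrange_eq_inner inner_add_right algebra_simps)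
qed

lemma continuous_on_lagrange: "continuous_on S (lagrange x j)"
  unfolding lagrange_def by (intro continuous_intros)

context
  fixes x :: "'n::finite option \<Rightarrow> real^'n"
  assumes nondeg: "det (vertex_matrix x) \<noteq> 0"
begin

lemma vertex_matrix_inverse:
  "vertex_matrix x ** matrix_inv (vertex_matrix x) = mat 1"
  "matrix_inv (vertex_matrix x) ** vertex_matrix x = mat 1"
proof -
  have "\<exists>A'. vertex_matrix x ** A' = mat 1 \<and> A' ** vertex_matrix x = mat 1"
    using nondeg invertible_det_nz invertible_def by blast
  from someI_ex[OF this] show "vertex_matrix x ** matrix_inv (vertex_matrix x) = mat 1"
    "matrix_inv (vertex_matrix x) ** vertex_matrix x = mat 1"
    unfolding matrix_inv_def by auto
qed

lemma lagrange_vertex: "lagrange x j (x k) = (if k = j then 1 else 0)"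
proof -
  have "(vertex_matrix x ** matrix_inv (vertex_matrix x)) $ k $ j = mat 1 $ k $ j"
    by (simp add: vertex_matrix_inverse)
  then show ?thesis
    by (simp add: matrix_matrix_mult_def mat_def sum_UNIV_option vertex_matrix_def
        lagrange_def lcoef_def mult.commute add.commute)
qed

lemma sum_lcoef: "(\<Sum>j\<in>UNIV. lcoef x k j) = (if k = None then 1 else 0)"
proof -
  have "(matrix_inv (vertex_matrix x) ** vertex_matrix x) $ k $ None = mat 1 $ k $ None"
    by (simp add: vertex_matrix_inverse)
  then show ?thesis
    by (simp add: matrix_matrix_mult_def mat_def vertex_matrix_def lcoef_def)
qed

lemma sum_lcoef_mult_vertex:
  "(\<Sum>j\<in>UNIV. lcoef x k j * x j $ i) = (if k = Some i then 1 else 0)"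
proof -
  have "(matrix_inv (vertex_matrix x) ** vertex_matrix x) $ k $ Some i = mat 1 $ k $ Some i"
    by (simp add: vertex_matrix_inverse)
  then show ?thesis
    by (simp add: matrix_matrix_mult_def mat_def vertex_matrix_def lcoef_def)
qed

lemma sum_lagrange: "(\<Sum>j\<in>UNIV. lagrange x j y) = 1"
proof -
  have "(\<Sum>j\<in>UNIV. lagrange x j y)
      = (\<Sum>i\<in>UNIV. y $ i * (\<Sum>j\<in>UNIV. lcoef x (Some i) j)) + (\<Sum>j\<in>UNIV. lcoef x None j)"
    by (simp add: lagrange_def sum.distrib sum_sum_mult_swap)
  then show ?thesis by (simp add: sum_lcoef)
qed

lemma sum_lagrange_scaleR: "(\<Sum>j\<in>UNIV. lagrange x j y *\<^sub>R x j) = y"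
proof (rule vec_eq_iff[THEN iffD2, rule_format])
  fix i'
  have "(\<Sum>j\<in>UNIV. lagrange x j y *\<^sub>R x j) $ i'
      = (\<Sum>j\<in>UNIV. \<Sum>i\<in>UNIV. (lcoef x (Some i) j * x j $ i') * y $ i)
        + (\<Sum>j\<in>UNIV. lcoef x None j * x j $ i')"
    by (simp add: sum_component lagrange_def sum.distrib sum_distrib_right sum_distrib_left
        algebra_simps)
  also have "\<dots> = (\<Sum>i\<in>UNIV. y $ i * (\<Sum>j\<in>UNIV. lcoef x (Some i) j * x j $ i'))
        + (\<Sum>j\<in>UNIV. lcoef x None j * x j $ i')"
    by (simp only: sum_sum_mult_swap)
  also have "\<dots> = y $ i'"
    by (simp add: sum_lcoef_mult_vertex if_distrib cong: if_cong)
  finally show "(\<Sum>j\<in>UNIV. lagrange x j y *\<^sub>R x j) $ i' = y $ i'" .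
qed

lemma lagrange_injective:
  assumes "\<And>j. lagrange x j y = lagrange x j z"
  shows "y = z"
proof -
  have "y = (\<Sum>j\<in>UNIV. lagrange x j y *\<^sub>R x j)" by (rule sum_lagrange_scaleR[symmetric])
  also have "\<dots> = (\<Sum>j\<in>UNIV. lagrange x j z *\<^sub>R x j)" by (simp add: assms)
  also have "\<dots> = z" by (rule sum_lagrange_scaleR)
  finally show ?thesis .
qed

lemma simplex_of_eq_lagrange_nonneg: "simplex_of x = {y. \<forall>j. 0 \<le> lagrange x j y}"
proof
  show "simplex_of x \<subseteq> {y. \<forall>j. 0 \<le> lagrange x j y}"
    unfolding simplex_of_def
  proof (rule hull_minimal)
    show "range x \<subseteq> {y. \<forall>j. 0 \<le> lagrange x j y}"
      using lagrange_vertex by auto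
    show "convex {y. \<forall>j. 0 \<le> lagrange x j y}"
      unfolding convex_def by (auto simp: lagrange_affine)
  qed
  show "{y. \<forall>j. 0 \<le> lagrange x j y} \<subseteq> simplex_of x"
  proof
    fix y assume "y \<in> {y. \<forall>j. 0 \<le> lagrange x j y}"
    then have "(\<Sum>j\<in>UNIV. lagrange x j y *\<^sub>R x j) \<in> convex hull (range x)"
      by (intro convex_sum) (auto simp: sum_lagrange intro: hull_subset[THEN subsetD])
    then show "y \<in> simplex_of x" by (simp add: sum_lagrange_scaleR simplex_of_def)
  qed
qed

end

lemma compact_simplex_of: "compact (simplex_of x)"
  unfolding simplex_of_def by (intro compact_convex_hull finite_imp_compact) auto

section \<open>Integrals over homothetic images\<close>

lemma integrable_on_compact_continuous:
  fixes f :: "'a::euclidean_space \<Rightarrow> 'b::euclidean_space"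
  assumes "compact S" "continuous_on S f"
  shows "f integrable_on S"
  using borel_integrable_compact[OF assms] set_borel_integral_eq_integral(1)
  unfolding set_integrable_def by blast

lemma has_integral_affine_image:
  fixes f :: "real^'n::finite \<Rightarrow> 'b::banach"
  assumes "bounded S" "t > 0" "((\<lambda>y. f (t *\<^sub>R y + c)) has_integral I) S"
  shows "(f has_integral (t ^ CARD('n)) *\<^sub>R I) ((\<lambda>y. t *\<^sub>R y + c) ` S)"
proof -
  let ?g = "\<lambda>y. t *\<^sub>R y + c" and ?h = "\<lambda>z. (1 / t) *\<^sub>R z + - ((1 / t) *\<^sub>R c)"
  have hg: "?h (?g y) = y" "?g (?h z) = z" for y z
    using \<open>t > 0\<close> by (simp_all add: algebra_simps)
  have h_mem: "?h z \<in> S \<longleftrightarrow> z \<in> ?g ` S" for z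
  proof
    assume "?h z \<in> S"
    then have "?g (?h z) \<in> ?g ` S" by (rule imageI)
    then show "z \<in> ?g ` S" by (simp only: hg)
  next
    assume "z \<in> ?g ` S"
    then obtain y where "y \<in> S" "z = ?g y" by blast
    then show "?h z \<in> S" by (simp only: hg)
  qed
  obtain a where a: "S \<subseteq> cbox (-a) a"
    using bounded_subset_cbox_symmetric assms(1) by blast
  have "((\<lambda>y. if y \<in> S then f (?g y) else 0) has_integral I) (cbox (-a) a)"
    using assms(3) a by simp
  from has_integral_affinity[OF this, of "1 / t" "- ((1 / t) *\<^sub>R c)"]
  have "((\<lambda>z. if ?h z \<in> S then f (?g (?h z)) else 0) has_integral
      (1 / \<bar>1 / t\<bar> ^ DIM(real^'n)) *\<^sub>R I)
      ((\<lambda>z. (1 / (1 / t)) *\<^sub>R z + - ((1 / (1 / t)) *\<^sub>R (- ((1 / t) *\<^sub>R c)))) ` cbox (-a) a)"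
    using \<open>t > 0\<close> by simp
  moreover have "(\<lambda>z. if ?h z \<in> S then f (?g (?h z)) else 0) = (\<lambda>z. if z \<in> ?g ` S then f z else 0)"
    using hg h_mem by auto
  moreover have "(\<lambda>z. (1 / (1 / t)) *\<^sub>R z + - ((1 / (1 / t)) *\<^sub>R (- ((1 / t) *\<^sub>R c)))) = ?g"
    using \<open>t > 0\<close> by (simp add: fun_eq_iff)
  moreover have "1 / \<bar>1 / t\<bar> ^ DIM(real^'n) = t ^ CARD('n)"
    using \<open>t > 0\<close> by (simp add: power_one_over)
  ultimately have
    "((\<lambda>z. if z \<in> ?g ` S then f z else 0) has_integral (t ^ CARD('n)) *\<^sub>R I) (?g ` cbox (-a) a)"
    by (simp only:)
  moreover have "?g ` S \<subseteq> ?g ` cbox (-a) a" using a by blast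
  ultimately show ?thesis by simp
qed

lemma integral_affine_image:
  fixes f :: "real^'n::finite \<Rightarrow> real"
  assumes "compact S" "t > 0" "continuous_on ((\<lambda>y. t *\<^sub>R y + c) ` S) f"
  shows "integral ((\<lambda>y. t *\<^sub>R y + c) ` S) f = t ^ CARD('n) * integral S (\<lambda>y. f (t *\<^sub>R y + c))"
proof -
  have "continuous_on S (\<lambda>y. f (t *\<^sub>R y + c))"
    by (intro continuous_on_compose2[OF assms(3)] continuous_intros) auto
  then have "(\<lambda>y. f (t *\<^sub>R y + c)) integrable_on S"
    by (rule integrable_on_compact_continuous[OF assms(1)])
  then have "(f has_integral t ^ CARD('n) *\<^sub>R integral S (\<lambda>y. f (t *\<^sub>R y + c)))
      ((\<lambda>y. t *\<^sub>R y + c) ` S)"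
    by (intro has_integral_affine_image[OF compact_imp_bounded[OF assms(1)] assms(2)]
        integrable_integral)
  then show ?thesis by (simp add: integral_unique)
qed

section \<open>The centroid of a simplex\<close>

lemma integral_const_lmeasurable:
  "S \<in> lmeasurable \<Longrightarrow> integral S (\<lambda>_. c) = c * measure lebesgue S"
  using integral_cmul[of S c "\<lambda>_. 1::real"] by (simp add: lmeasure_integral)

lemma integral_lagrange:
  fixes x :: "'n::finite option \<Rightarrow> real^'n"
  assumes "compact S" "measure lebesgue S \<noteq> 0"
  shows "integral S (lagrange x j) = measure lebesgue S * lagrange x j (center_of_gravity S)"
proof -
  define a where "a = (\<chi> i. lcoef x (Some i) j)"
  have id_int: "(\<lambda>y. y) integrable_on S"
    by (rule integrable_on_compact_continuous[OF assms(1) continuous_on_id])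
  have "integral S (lagrange x j) = integral S (\<lambda>y. a \<bullet> y) + integral S (\<lambda>_. lcoef x None j)"
    unfolding lagrange_eq_inner a_def
    by (rule integral_add) (use id_int assms(1) lmeasurable_compact in
        \<open>auto intro: integrable_linear[OF _ bounded_linear_inner_right, unfolded o_def]
          integrable_on_const\<close>)
  also have "integral S (\<lambda>y. a \<bullet> y) = a \<bullet> integral S (\<lambda>y. y)"
    using integral_linear[OF id_int bounded_linear_inner_right, of a] by (simp add: o_def)
  also have "integral S (\<lambda>_. lcoef x None j) = lcoef x None j * measure lebesgue S"
    by (rule integral_const_lmeasurable[OF lmeasurable_compact[OF assms(1)]])
  finally have "integral S (lagrange x j) = a \<bullet> integral S (\<lambda>y. y) + lcoef x None j * measure lebesgue S" .
  moreover have "lagrange x j (center_of_gravity S)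
      = a \<bullet> integral S (\<lambda>y. y) / measure lebesgue S + lcoef x None j"
    by (simp add: lagrange_eq_inner center_of_gravity_def a_def inner_scaleR_right)
  ultimately show ?thesis using assms(2) by (simp add: field_simps)
qed

lemma image_shrink_simplex_to_vertex:
  fixes x :: "'n::finite option \<Rightarrow> real^'n"
  assumes nondeg: "det (vertex_matrix x) \<noteq> 0" and "0 < t" "t \<le> 1"
  shows "(\<lambda>y. t *\<^sub>R y + (1 - t) *\<^sub>R x j) ` simplex_of x = {y \<in> simplex_of x. 1 - t \<le> lagrange x j y}"
    (is "?g ` _ = _")
proof -
  have lagrange_g: "lagrange x k (?g y) = t * lagrange x k y + (1 - t) * (if k = j then 1 else 0)"
    for k y by (simp add: lagrange_affine lagrange_vertex[OF nondeg])
  show ?thesis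
  proof (intro equalityI subsetI)
    fix z assume "z \<in> ?g ` simplex_of x"
    then show "z \<in> {y \<in> simplex_of x. 1 - t \<le> lagrange x j y}"
      using \<open>0 < t\<close> \<open>t \<le> 1\<close> by (auto simp: simplex_of_eq_lagrange_nonneg[OF nondeg] lagrange_g)
  next
    fix z assume z: "z \<in> {y \<in> simplex_of x. 1 - t \<le> lagrange x j y}"
    define y where "y = (1 / t) *\<^sub>R z + (1 - 1 / t) *\<^sub>R x j"
    have "lagrange x k y = (lagrange x k z - (1 - t) * (if k = j then 1 else 0)) / t" for k
      using \<open>t > 0\<close> by (simp add: y_def lagrange_affine lagrange_vertex[OF nondeg] field_simps)
    then have "y \<in> simplex_of x"
      using z \<open>t > 0\<close> by (auto simp: simplex_of_eq_lagrange_nonneg[OF nondeg])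
    moreover have "z = ?g y"
      using \<open>t > 0\<close> by (simp add: y_def algebra_simps)
    ultimately show "z \<in> ?g ` simplex_of x" by blast
  qed
qed

text \<open>Cutting the simplex at the level \<open>1 - t\<close> of \<open>\<lambda>\<^sub>j\<close> leaves a copy of the simplex
  shrunk by \<open>t\<close> towards the vertex \<open>x\<^sub>j\<close>, on which \<open>\<lambda>\<^sub>j - (1 - t)\<close> is \<open>t \<lambda>\<^sub>j\<close> transported.\<close>
lemma integral_lagrange_simplex_recursive_bound:
  fixes x :: "'n::finite option \<Rightarrow> real^'n"
  assumes nondeg: "det (vertex_matrix x) \<noteq> 0" and t: "0 < t" "t < 1"
  defines "S \<equiv> simplex_of x"
  shows "integral S (lagrange x j)
    \<le> (1 - t) * measure lebesgue S + t ^ Suc CARD('n) * integral S (lagrange x j)"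
proof -
  define g where "g = (\<lambda>y. t *\<^sub>R y + (1 - t) *\<^sub>R x j)"
  define H where "H = g ` S"
  define \<phi> where "\<phi> = (\<lambda>y. lagrange x j y - (1 - t))"
  have H_eq: "H = {y \<in> S. 1 - t \<le> lagrange x j y}"
    unfolding H_def g_def S_def by (rule image_shrink_simplex_to_vertex[OF nondeg t(1) less_imp_le[OF t(2)]])
  have cS: "compact S" unfolding S_def by (rule compact_simplex_of)
  have cH: "compact H" unfolding H_def g_def
    by (rule compact_continuous_image) (use cS in \<open>auto intro!: continuous_intros\<close>)
  have \<phi>_cont: "continuous_on T \<phi>" for T
    unfolding \<phi>_def by (intro continuous_intros continuous_on_lagrange)
  have HS: "H \<inter> S = H" using H_eq by blast
  have int_cut: "(\<lambda>y. if y \<in> H then \<phi> y else 0) integrable_on S"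
    using integrable_on_compact_continuous[OF cH \<phi>_cont] by (simp add: integrable_restrict_Int HS)
  have int_lagrange: "lagrange x j integrable_on S"
    by (rule integrable_on_compact_continuous[OF cS continuous_on_lagrange])
  have int_bound: "(\<lambda>y. (1 - t) + (if y \<in> H then \<phi> y else 0)) integrable_on S"
    by (rule integrable_add[OF integrable_on_const[OF lmeasurable_compact[OF cS]] int_cut])
  have "integral S (lagrange x j) \<le> integral S (\<lambda>y. (1 - t) + (if y \<in> H then \<phi> y else 0))"
    by (rule integral_le[OF int_lagrange int_bound]) (auto simp: H_eq \<phi>_def)
  also have "\<dots> = (1 - t) * measure lebesgue S + integral H \<phi>"
    using integral_add[OF integrable_on_const[OF lmeasurable_compact[OF cS]] int_cut]
    by (simp add: integral_const_lmeasurable[OF lmeasurable_compact[OF cS]] integral_restrict_Int HS)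
  also have "integral H \<phi> = t ^ CARD('n) * integral S (\<lambda>y. \<phi> (g y))"
    unfolding H_def g_def by (rule integral_affine_image[OF cS t(1) \<phi>_cont])
  also have "(\<lambda>y. \<phi> (g y)) = (\<lambda>y. t * lagrange x j y)"
    by (simp add: \<phi>_def g_def lagrange_affine lagrange_vertex[OF nondeg] fun_eq_iff)
  finally show ?thesis by (simp add: algebra_simps)
qed

text \<open>Let \<open>t \<rightarrow> 1\<close> in \<open>A (1 - t^{N+1}) \<le> (1 - t) m\<close>, divided by \<open>1 - t\<close>.\<close>
lemma le_of_geometric_recursive_bound:
  fixes A m :: real
  assumes "\<And>t. 0 < t \<Longrightarrow> t < 1 \<Longrightarrow> A \<le> (1 - t) * m + t ^ Suc N * A"
  shows "A * (real N + 1) \<le> m"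
proof -
  have bound: "A * (\<Sum>k<Suc N. t ^ k) \<le> m" if "0 < t" "t < 1" for t
  proof -
    have "(1 - t) * (A * (\<Sum>k<Suc N. t ^ k)) = A * (1 - t ^ Suc N)"
      by (simp only: one_diff_power_eq[of t "Suc N"] ac_simps)
    also have "\<dots> \<le> (1 - t) * m" using assms[OF that] by (simp add: algebra_simps)
    finally show ?thesis using that by simp
  qed
  have "eventually (\<lambda>t. t \<in> {0<..<1}) (at_left (1::real))"
    by (rule eventually_at_left_real) simp
  then have "eventually (\<lambda>t. A * (\<Sum>k<Suc N. t ^ k) \<le> m) (at_left (1::real))"
    by (rule eventually_mono) (simp add: bound del: sum.lessThan_Suc)
  moreover have "((\<lambda>t. A * (\<Sum>k<Suc N. t ^ k)) \<longlongrightarrow> A * (\<Sum>k<Suc N. 1 ^ k)) (at_left (1::real))"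
    by (intro tendsto_intros)
  ultimately have "A * (\<Sum>k<Suc N. 1 ^ k) \<le> m"
    using tendsto_le[OF trivial_limit_at_left_real tendsto_const] by blast
  then show ?thesis by (simp add: add.commute)
qed

lemma integral_lagrange_simplex:
  fixes x :: "'n::finite option \<Rightarrow> real^'n"
  assumes nondeg: "det (vertex_matrix x) \<noteq> 0"
  shows "integral (simplex_of x) (lagrange x j) = measure lebesgue (simplex_of x) / (real CARD('n) + 1)"
proof -
  define A where "A = (\<lambda>j. integral (simplex_of x) (lagrange x j))"
  define m where "m = measure lebesgue (simplex_of x)"
  have "(\<Sum>j\<in>UNIV. A j) = integral (simplex_of x) (\<lambda>y. \<Sum>j\<in>UNIV. lagrange x j y)"
    unfolding A_def
    by (rule integral_sum[symmetric])
      (auto intro: integrable_on_compact_continuous compact_simplex_of continuous_on_lagrange)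
  also have "\<dots> = m"
    by (simp add: sum_lagrange[OF nondeg] m_def
        lmeasure_integral[OF lmeasurable_compact[OF compact_simplex_of]])
  also have "m = (\<Sum>j\<in>(UNIV::'n option set). m / (real CARD('n) + 1))"
    by (simp add: card_UNIV_option field_simps)
  finally have sum_eq: "(\<Sum>j\<in>UNIV. A j) = (\<Sum>j\<in>(UNIV::'n option set). m / (real CARD('n) + 1))" .
  have le: "A k \<le> m / (real CARD('n) + 1)" for k
    using le_of_geometric_recursive_bound[OF integral_lagrange_simplex_recursive_bound[OF nondeg]]
    by (simp add: A_def m_def field_simps)
  have "A j = m / (real CARD('n) + 1)"
    using sum_mono_inv[OF sum_eq le] by simp
  then show ?thesis by (simp add: A_def m_def)
qed

lemma lagrange_center_of_gravity_simplex:
  fixes x :: "'n::finite option \<Rightarrow> real^'n"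
  assumes nondeg: "det (vertex_matrix x) \<noteq> 0" and "measure lebesgue (simplex_of x) \<noteq> 0"
  shows "lagrange x j (center_of_gravity (simplex_of x)) = 1 / (real CARD('n) + 1)"
proof -
  let ?m = "measure lebesgue (simplex_of x)"
  have "?m * lagrange x j (center_of_gravity (simplex_of x)) = ?m * (1 / (real CARD('n) + 1))"
    using integral_lagrange[OF compact_simplex_of assms(2)] integral_lagrange_simplex[OF nondeg]
    by simp
  then show ?thesis using mult_left_cancel[OF assms(2)] by blast
qed

section \<open>The unit cube\<close>

lemma measure_unit_cube: "measure lebesgue (unit_cube :: (real^'n::finite) set) = 1"
proof -
  have "(0::real^'n) \<in> cbox 0 1" by (simp add: mem_box_cart)
  then have "Henstock_Kurzweil_Integration.content (cbox (0::real^'n) 1) = 1"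
    by (subst content_cbox_cart) auto
  then show ?thesis by (simp add: unit_cube_def)
qed

text \<open>The reflection \<open>y \<mapsto> 1 - y\<close> preserves the cube, so \<open>\<integral> y = \<integral> (1 - y) = 1 - \<integral> y\<close>.\<close>
lemma center_of_gravity_unit_cube:
  "center_of_gravity (unit_cube :: (real^'n::finite) set) = (\<chi> i. 1 / 2)"
proof -
  let ?Q = "cbox (0::real^'n) 1" and ?I = "integral (cbox (0::real^'n) 1) (\<lambda>y. y)"
  have I: "((\<lambda>y. y) has_integral ?I) ?Q"
    by (rule integrable_integral[OF integrable_continuous[OF continuous_on_id]])
  have reflect_eq: "(\<lambda>y::real^'n. c *\<^sub>R y + - (c *\<^sub>R 1)) = (\<lambda>y. 1 - y)"
    if "c = -1" for c :: real
    using that by (simp add: fun_eq_iff algebra_simps)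
  have reflect_cube: "(\<lambda>y. 1 - y) ` ?Q = ?Q"
  proof (intro equalityI subsetI)
    fix y assume "y \<in> ?Q"
    then have "1 - y \<in> ?Q" "y = 1 - (1 - y)" by (auto simp: mem_box_cart)
    then show "y \<in> (\<lambda>y. 1 - y) ` ?Q" by blast
  qed (auto simp: mem_box_cart)
  from has_integral_affinity[OF I, of "-1" 1]
  have reflected: "((\<lambda>y. 1 - y) has_integral ?I) ?Q"
    using reflect_eq[of "1 / (-1)"] reflect_eq[of "-1"] reflect_cube by simp
  have "((\<lambda>y. 1 - y) has_integral Henstock_Kurzweil_Integration.content ?Q *\<^sub>R 1 - ?I) ?Q"
    by (rule has_integral_diff[OF has_integral_const I])
  then have "?I = Henstock_Kurzweil_Integration.content ?Q *\<^sub>R 1 - ?I"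
    by (rule has_integral_unique[OF reflected])
  moreover have content_cube: "Henstock_Kurzweil_Integration.content ?Q = 1"
    using measure_unit_cube[where 'n='n] by (simp add: unit_cube_def)
  ultimately have "?I = 1 - ?I" by simp
  then have halves: "?I $ i = 1 - ?I $ i" for i by (metis vector_minus_component one_index)
  have "?I $ i = 1 / 2" for i using halves[of i] by linarith
  then have "?I = (\<chi> i. 1 / 2)" by (simp add: vec_eq_iff)
  then show ?thesis by (simp add: center_of_gravity_def unit_cube_def content_cube)
qed

lemma finite_cube_vertices: "finite (cube_vertices :: (real^'n::finite) set)"
proof (rule finite_subset)
  show "cube_vertices \<subseteq> (\<lambda>P. \<chi> i. if P i then 1 else 0) ` (UNIV :: ('n \<Rightarrow> bool) set)"
  proof
    fix v :: "real^'n" assume "v \<in> cube_vertices"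
    then have "v = (\<chi> i. if v $ i = 1 then 1 else 0)"
      by (auto simp: vec_eq_iff cube_vertices_def)
    then show "v \<in> (\<lambda>P. \<chi> i. if P i then 1 else 0) ` UNIV"
      by (intro image_eqI[where x="\<lambda>i. v $ i = 1"]) auto
  qed
qed simp

lemma cube_vertices_subset_unit_cube: "cube_vertices \<subseteq> (unit_cube :: (real^'n::finite) set)"
proof
  fix v :: "real^'n" assume "v \<in> cube_vertices"
  then have "v $ i = 0 \<or> v $ i = 1" for i by (simp add: cube_vertices_def)
  then have "0 \<le> v $ i \<and> v $ i \<le> 1" for i by (metis order.refl zero_le_one)
  then show "v \<in> unit_cube" by (simp add: unit_cube_def mem_box_cart)
qed

lemma sum_mult_le_on_unit_cube:
  fixes a :: "'n::finite \<Rightarrow> real"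
  assumes "y \<in> unit_cube"
  shows "(\<Sum>i\<in>UNIV. a i * y $ i) \<le> (\<Sum>i\<in>UNIV. max (a i) 0)"
proof (rule sum_mono)
  fix i
  have "0 \<le> y $ i" "y $ i \<le> 1" using assms by (auto simp: unit_cube_def mem_box_cart)
  then show "a i * y $ i \<le> max (a i) 0"
    by (cases "0 \<le> a i") (auto intro: mult_left_le mult_nonpos_nonneg)
qed

lemma sum_mult_at_cube_vertex:
  fixes a :: "'n::finite \<Rightarrow> real"
  shows "\<exists>v\<in>cube_vertices. (\<Sum>i\<in>UNIV. a i * v $ i) = (\<Sum>i\<in>UNIV. max (a i) 0)"
proof
  let ?v = "(\<chi> i. if 0 \<le> a i then 1 else 0) :: real^'n"
  show "?v \<in> cube_vertices" by (simp add: cube_vertices_def)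
  show "(\<Sum>i\<in>UNIV. a i * ?v $ i) = (\<Sum>i\<in>UNIV. max (a i) 0)"
    by (rule sum.cong) (auto simp: max_def)
qed

section \<open>Simplices with \<open>S \<subseteq> Q \<subseteq> nS\<close>\<close>

lemma homot_affine_image:
  "homot \<sigma> \<Omega> = (\<lambda>y. \<sigma> *\<^sub>R y + (1 - \<sigma>) *\<^sub>R center_of_gravity \<Omega>) ` \<Omega>"
  unfolding homot_def by (rule image_cong) (auto simp: algebra_simps)

lemma homot_mono:
  assumes "center_of_gravity A = center_of_gravity B" "A \<subseteq> B"
  shows "homot \<sigma> A \<subseteq> homot \<sigma> B"
  using assms unfolding homot_def by auto

lemma homot_subset_homot_mult:
  assumes "center_of_gravity A = center_of_gravity B" "A \<subseteq> homot \<tau> B"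
  shows "homot \<sigma> A \<subseteq> homot (\<sigma> * \<tau>) B"
  using assms unfolding homot_def by (force simp: algebra_simps)

definition lcoef_pos_sum :: "('n::finite option \<Rightarrow> real^'n) \<Rightarrow> 'n option \<Rightarrow> real" where
  "lcoef_pos_sum x j = (\<Sum>i\<in>UNIV. max (lcoef x (Some i) j) 0)"

definition lcoef_neg_sum :: "('n::finite option \<Rightarrow> real^'n) \<Rightarrow> 'n option \<Rightarrow> real" where
  "lcoef_neg_sum x j = (\<Sum>i\<in>UNIV. max (- lcoef x (Some i) j) 0)"

lemma sum_nonneg_part:
  fixes f :: "'a::finite \<Rightarrow> real"
  shows "(\<Sum>i\<in>{i. 0 \<le> f i}. f i) = (\<Sum>i\<in>UNIV. max (f i) 0)"
proof -
  have "(\<Sum>i\<in>{i. 0 \<le> f i}. f i) = (\<Sum>i\<in>UNIV. if 0 \<le> f i then f i else 0)"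
    using sum.inter_filter[of UNIV f "\<lambda>i. 0 \<le> f i"] by simp
  also have "\<dots> = (\<Sum>i\<in>UNIV. max (f i) 0)" by (rule sum.cong) (auto simp: max_def)
  finally show ?thesis .
qed

lemma sum_neg_part:
  fixes f :: "'a::finite \<Rightarrow> real"
  shows "(\<Sum>i\<in>{i. f i < 0}. \<bar>f i\<bar>) = (\<Sum>i\<in>UNIV. max (- f i) 0)"
proof -
  have "(\<Sum>i\<in>{i. f i < 0}. \<bar>f i\<bar>) = (\<Sum>i\<in>UNIV. if f i < 0 then \<bar>f i\<bar> else 0)"
    using sum.inter_filter[of UNIV "\<lambda>i. \<bar>f i\<bar>" "\<lambda>i. f i < 0"] by simp
  also have "\<dots> = (\<Sum>i\<in>UNIV. max (- f i) 0)" by (rule sum.cong) (auto simp: max_def)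
  finally show ?thesis .
qed

lemma max_zero_diff_max_neg_zero: "max a 0 - max (- a) 0 = (a::real)"
  by (simp add: max_def)

lemma max_zero_add_max_neg_zero: "max a 0 + max (- a) 0 = \<bar>a::real\<bar>"
  by (simp add: max_def)

lemma lagrange_le_on_unit_cube:
  "y \<in> unit_cube \<Longrightarrow> lagrange x j y \<le> lcoef_pos_sum x j + lcoef x None j"
  using sum_mult_le_on_unit_cube[of y "\<lambda>i. lcoef x (Some i) j"]
  by (simp add: lagrange_def lcoef_pos_sum_def)

lemma lagrange_attains_on_cube_vertices:
  "\<exists>v\<in>cube_vertices. lagrange x j v = lcoef_pos_sum x j + lcoef x None j"
  using sum_mult_at_cube_vertex[of "\<lambda>i. lcoef x (Some i) j"]
  by (simp add: lagrange_def lcoef_pos_sum_def)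

lemma neg_lagrange_attains_on_cube_vertices:
  "\<exists>v\<in>cube_vertices. - lagrange x j v = lcoef_neg_sum x j - lcoef x None j"
  using sum_mult_at_cube_vertex[of "\<lambda>i. - lcoef x (Some i) j"]
  by (simp add: lagrange_def lcoef_neg_sum_def sum_negf)

lemma lcoef_pos_sum_sub_neg_sum: "lcoef_pos_sum x j - lcoef_neg_sum x j = (\<Sum>i\<in>UNIV. lcoef x (Some i) j)"
  by (simp add: lcoef_pos_sum_def lcoef_neg_sum_def sum_subtractf[symmetric] max_zero_diff_max_neg_zero)

lemma lcoef_pos_sum_add_neg_sum: "lcoef_pos_sum x j + lcoef_neg_sum x j = (\<Sum>i\<in>UNIV. \<bar>lcoef x (Some i) j\<bar>)"
  by (simp add: lcoef_pos_sum_def lcoef_neg_sum_def sum.distrib[symmetric] max_zero_add_max_neg_zero)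

text \<open>The rows \<open>1, \<dots>, n\<close> of the inverse vertex matrix sum to zero.\<close>
lemma sum_max_lcoef_row_eq:
  assumes "det (vertex_matrix x) \<noteq> 0"
  shows "(\<Sum>j\<in>UNIV. max (lcoef x (Some i) j) 0) = (\<Sum>j\<in>UNIV. max (- lcoef x (Some i) j) 0)"
proof -
  have "(\<Sum>j\<in>UNIV. max (lcoef x (Some i) j) 0) - (\<Sum>j\<in>UNIV. max (- lcoef x (Some i) j) 0)
      = (\<Sum>j\<in>UNIV. lcoef x (Some i) j)"
    by (simp add: sum_subtractf[symmetric] max_zero_diff_max_neg_zero)
  then show ?thesis by (simp add: sum_lcoef[OF assms])
qed

locale simplex_in_cube =
  fixes x :: "'n::finite option \<Rightarrow> real^'n" and n :: nat
  assumes n_eq_card: "n = CARD('n)"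
    and nondeg: "det (vertex_matrix x) \<noteq> 0"
    and simplex_subset_cube: "simplex_of x \<subseteq> unit_cube"
    and cube_subset_homot: "unit_cube \<subseteq> homot (real n) (simplex_of x)"
begin

lemma n_pos: "0 < n"
  by (simp add: n_eq_card)

lemma vertex_in_unit_cube: "x j \<in> unit_cube"
proof -
  have "x j \<in> simplex_of x"
    unfolding simplex_of_def by (rule hull_subset[THEN subsetD]) simp
  then show ?thesis using simplex_subset_cube by blast
qed

lemma measure_simplex_nonzero: "measure lebesgue (simplex_of x) \<noteq> 0"
proof
  assume m0: "measure lebesgue (simplex_of x) = 0"
  let ?T = "(\<lambda>y. real n *\<^sub>R y + (1 - real n) *\<^sub>R center_of_gravity (simplex_of x)) ` simplex_of x"
  have "compact ?T"
    by (rule compact_continuous_image[OF _ compact_simplex_of]) (intro continuous_intros)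
  moreover have "unit_cube \<subseteq> ?T"
    using cube_subset_homot by (simp add: homot_affine_image)
  ultimately have "measure lebesgue (unit_cube :: (real^'n) set) \<le> measure lebesgue ?T"
    using measure_mono_fmeasurable fmeasurableD[OF lmeasurable_cbox] lmeasurable_compact
    unfolding unit_cube_def by blast
  also have "measure lebesgue ?T = 0"
    using measure_lebesgue_affine[of "real n" "(1 - real n) *\<^sub>R center_of_gravity (simplex_of x)"
        "simplex_of x"] m0 by simp
  finally show False by (simp add: measure_unit_cube)
qed

lemma lagrange_center_of_gravity: "lagrange x j (center_of_gravity (simplex_of x)) = 1 / (real n + 1)"
  using lagrange_center_of_gravity_simplex[OF nondeg measure_simplex_nonzero] by (simp add: n_eq_card)

text \<open>Every point of the cube is \<open>n s + (1 - n) c(S)\<close> with \<open>s \<in> S\<close>, and \<open>\<lambda>\<^sub>j(c(S)) = 1/(n+1)\<close>.\<close>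
lemma lagrange_lower_bound:
  assumes "y \<in> unit_cube"
  shows "- ((real n - 1) / (real n + 1)) \<le> lagrange x j y"
proof -
  obtain s where s: "s \<in> simplex_of x"
    and y: "y = real n *\<^sub>R s + (1 - real n) *\<^sub>R center_of_gravity (simplex_of x)"
    using assms cube_subset_homot by (auto simp: homot_affine_image)
  have "lagrange x j y = real n * lagrange x j s + (1 - real n) / (real n + 1)"
    by (simp add: y lagrange_affine lagrange_center_of_gravity)
  moreover have "0 \<le> lagrange x j s"
    using s simplex_of_eq_lagrange_nonneg[OF nondeg] by auto
  moreover have "(1 - real n) / (real n + 1) = - ((real n - 1) / (real n + 1))"
    by (simp add: field_simps)
  ultimately show ?thesis by (simp add: n_pos)
qed

lemma one_le_lcoef_pos_sum: "1 \<le> lcoef_pos_sum x j + lcoef x None j"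
  using lagrange_le_on_unit_cube[where x=x and j=j, OF vertex_in_unit_cube[of j]]
  by (simp add: lagrange_vertex[OF nondeg])

lemma lcoef_neg_sum_le: "lcoef_neg_sum x j - lcoef x None j \<le> (real n - 1) / (real n + 1)"
proof -
  obtain v where "v \<in> cube_vertices" "- lagrange x j v = lcoef_neg_sum x j - lcoef x None j"
    using neg_lagrange_attains_on_cube_vertices by blast
  then show ?thesis
    using lagrange_lower_bound[of v j] cube_vertices_subset_unit_cube by fastforce
qed

lemma one_le_sum_max_lcoef_row: "1 \<le> (\<Sum>j\<in>UNIV. max (lcoef x (Some i) j) 0)"
proof -
  have "1 = (\<Sum>j\<in>UNIV. lcoef x (Some i) j * x j $ i)"
    by (simp add: sum_lcoef_mult_vertex[OF nondeg])
  also have "\<dots> \<le> (\<Sum>j\<in>UNIV. max (lcoef x (Some i) j) 0)"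
  proof (rule sum_mono)
    fix j
    have "0 \<le> x j $ i" "x j $ i \<le> 1"
      using vertex_in_unit_cube[of j] by (auto simp: unit_cube_def mem_box_cart)
    then show "lcoef x (Some i) j * x j $ i \<le> max (lcoef x (Some i) j) 0"
      by (cases "0 \<le> lcoef x (Some i) j") (auto intro: mult_left_le mult_nonpos_nonneg)
  qed
  finally show ?thesis .
qed

lemma sum_const_vertices: "(\<Sum>j\<in>(UNIV::'n option set). c) = (real n + 1) * c"
  by (simp add: card_UNIV_option n_eq_card)

lemma sum_const_coordinates: "(\<Sum>i\<in>(UNIV::'n set). c) = real n * c"
  by (simp add: n_eq_card)

text \<open>The row bounds give \<open>\<ge>\<close>, the column bounds \<open>q_j - l_{n+1,j} \<le> (n-1)/(n+1)\<close> give \<open>\<le>\<close>;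
  hence all these bounds are attained.\<close>
lemma sum_lcoef_neg_sum: "(\<Sum>j\<in>UNIV. lcoef_neg_sum x j) = real n"
proof (rule antisym)
  have "(\<Sum>j\<in>UNIV. lcoef_neg_sum x j - lcoef x None j) \<le> (\<Sum>j\<in>(UNIV::'n option set). (real n - 1) / (real n + 1))"
    by (rule sum_mono[OF lcoef_neg_sum_le])
  then show "(\<Sum>j\<in>UNIV. lcoef_neg_sum x j) \<le> real n"
    using n_pos by (simp add: sum_subtractf sum_lcoef[OF nondeg] sum_const_vertices del: sum_constant)
next
  have "real n = (\<Sum>i\<in>(UNIV::'n set). 1)" by (simp add: sum_const_coordinates del: sum_constant)
  also have "\<dots> \<le> (\<Sum>i\<in>UNIV. \<Sum>j\<in>UNIV. max (- lcoef x (Some i) j) 0)"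
    by (rule sum_mono) (simp add: one_le_sum_max_lcoef_row flip: sum_max_lcoef_row_eq[OF nondeg])
  also have "\<dots> = (\<Sum>j\<in>UNIV. lcoef_neg_sum x j)"
    unfolding lcoef_neg_sum_def by (rule sum.swap)
  finally show "real n \<le> (\<Sum>j\<in>UNIV. lcoef_neg_sum x j)" .
qed

lemma lcoef_neg_sum_eq: "lcoef_neg_sum x j - lcoef x None j = (real n - 1) / (real n + 1)"
proof (rule sum_mono_inv[of _ "UNIV::'n option set"])
  show "(\<Sum>j\<in>UNIV. lcoef_neg_sum x j - lcoef x None j)
      = (\<Sum>j\<in>(UNIV::'n option set). (real n - 1) / (real n + 1))"
    using n_pos by (simp add: sum_subtractf sum_lcoef_neg_sum sum_lcoef[OF nondeg] sum_const_vertices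
        del: sum_constant)
qed (simp_all add: lcoef_neg_sum_le)

lemma sum_max_neg_lcoef_row: "(\<Sum>j\<in>UNIV. max (- lcoef x (Some i) j) 0) = 1"
proof (rule sym, rule sum_mono_inv[of "\<lambda>_. 1" "UNIV::'n set"])
  have "(\<Sum>i\<in>UNIV. \<Sum>j\<in>UNIV. max (- lcoef x (Some i) j) 0) = (\<Sum>j\<in>UNIV. lcoef_neg_sum x j)"
    unfolding lcoef_neg_sum_def by (rule sum.swap)
  then show "(\<Sum>i\<in>(UNIV::'n set). 1) = (\<Sum>i\<in>UNIV. \<Sum>j\<in>UNIV. max (- lcoef x (Some i) j) 0)"
    by (simp add: sum_lcoef_neg_sum sum_const_coordinates del: sum_constant)
qed (simp_all add: one_le_sum_max_lcoef_row flip: sum_max_lcoef_row_eq[OF nondeg])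

lemma lcoef_pos_sum_eq: "lcoef_pos_sum x j + lcoef x None j = 1"
proof (rule sym, rule sum_mono_inv[of "\<lambda>_. 1" "UNIV::'n option set"])
  have "(\<Sum>j\<in>UNIV. lcoef_pos_sum x j) = (\<Sum>i\<in>UNIV. \<Sum>j\<in>UNIV. max (lcoef x (Some i) j) 0)"
    unfolding lcoef_pos_sum_def by (rule sum.swap)
  also have "\<dots> = real n"
    by (simp add: sum_max_lcoef_row_eq[OF nondeg] sum_max_neg_lcoef_row sum_const_coordinates
        del: sum_constant)
  finally show "(\<Sum>j\<in>(UNIV::'n option set). 1) = (\<Sum>j\<in>UNIV. lcoef_pos_sum x j + lcoef x None j)"
    by (simp add: sum.distrib sum_lcoef[OF nondeg] sum_const_vertices del: sum_constant)
qed (simp_all add: one_le_lcoef_pos_sum)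

lemma lagrange_le_one: "y \<in> unit_cube \<Longrightarrow> lagrange x j y \<le> 1"
  using lagrange_le_on_unit_cube[of y x j] by (simp add: lcoef_pos_sum_eq)

lemma neg_lagrange_le: "y \<in> unit_cube \<Longrightarrow> - lagrange x j y \<le> (real n - 1) / (real n + 1)"
  using lagrange_lower_bound[of y j] by linarith

lemma lagrange_attains_one: "\<exists>v\<in>cube_vertices. lagrange x j v = 1"
  using lagrange_attains_on_cube_vertices[of x j] by (simp add: lcoef_pos_sum_eq)

lemma neg_lagrange_attains: "\<exists>v\<in>cube_vertices. - lagrange x j v = (real n - 1) / (real n + 1)"
  using neg_lagrange_attains_on_cube_vertices[of x j] by (simp add: lcoef_neg_sum_eq)

lemma Max_lagrange_cube_vertices: "Max (lagrange x j ` cube_vertices) = 1"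
proof (rule Max_eqI)
  show "finite (lagrange x j ` cube_vertices)" by (simp add: finite_cube_vertices)
  show "y \<le> 1" if "y \<in> lagrange x j ` cube_vertices" for y
    using that lagrange_le_one cube_vertices_subset_unit_cube by blast
  show "1 \<in> lagrange x j ` cube_vertices"
    using lagrange_attains_one by (metis image_eqI)
qed

lemma Max_neg_lagrange_cube_vertices:
  "Max ((\<lambda>y. - lagrange x j y) ` cube_vertices) = (real n - 1) / (real n + 1)"
proof (rule Max_eqI)
  show "finite ((\<lambda>y. - lagrange x j y) ` cube_vertices)" by (simp add: finite_cube_vertices)
  show "y \<le> (real n - 1) / (real n + 1)" if "y \<in> (\<lambda>y. - lagrange x j y) ` cube_vertices" for y
    using that neg_lagrange_le cube_vertices_subset_unit_cube by blast
  show "(real n - 1) / (real n + 1) \<in> (\<lambda>y. - lagrange x j y) ` cube_vertices"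
    using neg_lagrange_attains by (metis image_eqI)
qed

lemma center_of_gravity_simplex: "center_of_gravity (simplex_of x) = (\<chi> i. 1 / 2)"
proof (rule lagrange_injective[OF nondeg])
  fix j
  have "lagrange x j (\<chi> i. 1 / 2) = (lcoef_pos_sum x j - lcoef_neg_sum x j) / 2 + lcoef x None j"
    by (simp add: lagrange_def lcoef_pos_sum_sub_neg_sum sum_divide_distrib)
  also have "\<dots> = 1 / (real n + 1)"
  proof -
    have pos: "lcoef_pos_sum x j = 1 - lcoef x None j"
      and neg: "lcoef_neg_sum x j = (real n - 1) / (real n + 1) + lcoef x None j"
      using lcoef_pos_sum_eq[of j] lcoef_neg_sum_eq[of j] by linarith+
    show ?thesis unfolding pos neg using n_pos by (simp add: field_simps)
  qed
  finally show "lagrange x j (center_of_gravity (simplex_of x)) = lagrange x j (\<chi> i. 1 / 2)"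
    by (simp add: lagrange_center_of_gravity)
qed

lemma center_of_gravity_simplex_eq_cube: "center_of_gravity (simplex_of x) = center_of_gravity unit_cube"
  by (simp add: center_of_gravity_simplex center_of_gravity_unit_cube)

lemma sum_abs_lcoef_row: "(\<Sum>j\<in>UNIV. \<bar>lcoef x (Some i) j\<bar>) = 2"
proof -
  have "(\<Sum>j\<in>UNIV. \<bar>lcoef x (Some i) j\<bar>)
      = (\<Sum>j\<in>UNIV. max (lcoef x (Some i) j) 0) + (\<Sum>j\<in>UNIV. max (- lcoef x (Some i) j) 0)"
    by (simp add: sum.distrib[symmetric] max_zero_add_max_neg_zero)
  then show ?thesis by (simp add: sum_max_lcoef_row_eq[OF nondeg] sum_max_neg_lcoef_row)
qed

lemma sum_abs_lcoef_column: "(\<Sum>i\<in>UNIV. \<bar>lcoef x (Some i) j\<bar>) = 2 * real n / (real n + 1)"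
proof -
  have "(\<Sum>i\<in>UNIV. \<bar>lcoef x (Some i) j\<bar>) = 1 + (real n - 1) / (real n + 1)"
    using lcoef_pos_sum_eq[of j] lcoef_neg_sum_eq[of j] lcoef_pos_sum_add_neg_sum[of x j] by linarith
  also have "\<dots> = 2 * real n / (real n + 1)"
    using n_pos by (simp add: field_simps)
  finally show ?thesis .
qed

lemma sum_nonneg_lcoef: "(\<Sum>i\<in>{i. 0 \<le> lcoef x (Some i) j}. lcoef x (Some i) j) = 1 - lcoef x None j"
  using lcoef_pos_sum_eq[of j] unfolding sum_nonneg_part lcoef_pos_sum_def[symmetric] by linarith

lemma sum_neg_lcoef:
  "(\<Sum>i\<in>{i. lcoef x (Some i) j < 0}. \<bar>lcoef x (Some i) j\<bar>) = (real n - 1) / (real n + 1) + lcoef x None j"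
  using lcoef_neg_sum_eq[of j] unfolding sum_neg_part lcoef_neg_sum_def[symmetric] by linarith

lemma homot_unit_cube_subset_homot_simplex:
  "homot \<sigma> unit_cube \<subseteq> homot (\<sigma> * real n) (simplex_of x)"
  using homot_subset_homot_mult[OF center_of_gravity_simplex_eq_cube[symmetric] cube_subset_homot] .

lemma homot_simplex_subset_homot_unit_cube: "homot \<sigma> (simplex_of x) \<subseteq> homot \<sigma> unit_cube"
  using homot_mono[OF center_of_gravity_simplex_eq_cube simplex_subset_cube] .

end

theorem theorem6p1:
  fixes x :: "'n::finite option \<Rightarrow> real^'n" and n :: nat
  defines "S \<equiv> simplex_of x"
    and "Q \<equiv> (unit_cube :: (real^'n) set)"
    and "lam \<equiv> lagrange x"
    and "l \<equiv> lcoef x"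
  assumes n_def: "n = CARD('n)"
    and nondeg: "det (vertex_matrix x) \<noteq> 0"
    and SQ: "S \<subseteq> Q"
    and QnS: "Q \<subseteq> homot (real n) S"
  shows
    "(\<forall>j. Max (lam j ` cube_vertices) = 1)
   \<and> (\<forall>j. Max ((\<lambda>y. - lam j y) ` cube_vertices) = (real n - 1) / (real n + 1))
   \<and> (\<forall>j. (\<exists>y\<in>Q. lam j y = 1) \<and> (\<forall>y\<in>Q. lam j y \<le> 1))
   \<and> (\<forall>j. (\<exists>y\<in>Q. - lam j y = (real n - 1) / (real n + 1))
          \<and> (\<forall>y\<in>Q. - lam j y \<le> (real n - 1) / (real n + 1)))
   \<and> center_of_gravity S = center_of_gravity Q
   \<and> center_of_gravity Q = (\<chi> i. 1 / 2)
   \<and> (\<forall>k::nat. homot (1 / real n ^ (k + 1)) Q \<subseteq> homot (1 / real n ^ k) S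
        \<and> homot (1 / real n ^ k) S \<subseteq> homot (1 / real n ^ k) Q
        \<and> homot (real n ^ k) S \<subseteq> homot (real n ^ k) Q
        \<and> homot (real n ^ k) Q \<subseteq> homot (real n ^ (k + 1)) S)
   \<and> (\<forall>i. (\<Sum>j\<in>UNIV. \<bar>l (Some i) j\<bar>) = 2)
   \<and> (\<forall>j. (\<Sum>i\<in>UNIV. \<bar>l (Some i) j\<bar>) = 2 * real n / (real n + 1))
   \<and> (\<forall>j. (\<Sum>i\<in>{i. l (Some i) j \<ge> 0}. l (Some i) j) = 1 - l None j
        \<and> (\<Sum>i\<in>{i. l (Some i) j < 0}. \<bar>l (Some i) j\<bar>) = (real n - 1) / (real n + 1) + l None j)
   \<and> Q \<subseteq> (\<Inter>j. {y. - (real n - 1) / (real n + 1) \<le> lam j y \<and> lam j y \<le> 1})"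
proof -
  interpret simplex_in_cube x n
    using n_def nondeg SQ QnS unfolding S_def Q_def by unfold_locales
  have vertices_in_Q: "cube_vertices \<subseteq> Q"
    unfolding Q_def by (rule cube_vertices_subset_unit_cube)
  have attained: "\<exists>y\<in>Q. lagrange x j y = 1"
    "\<exists>y\<in>Q. - lagrange x j y = (real n - 1) / (real n + 1)" for j
    using lagrange_attains_one[of j] neg_lagrange_attains[of j] vertices_in_Q by blast+
  have "1 / real n ^ (k + 1) * real n = 1 / real n ^ k" for k
    using n_pos by simp
  then have homot_chain: "homot (1 / real n ^ (k + 1)) Q \<subseteq> homot (1 / real n ^ k) S"
    "homot (real n ^ k) Q \<subseteq> homot (real n ^ (k + 1)) S" for k
    using homot_unit_cube_subset_homot_simplex[of "1 / real n ^ (k + 1)"]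
      homot_unit_cube_subset_homot_simplex[of "real n ^ k"]
    unfolding S_def Q_def by (simp_all add: mult.commute)
  show ?thesis
    using Max_lagrange_cube_vertices Max_neg_lagrange_cube_vertices attained lagrange_le_one
      neg_lagrange_le center_of_gravity_simplex_eq_cube center_of_gravity_unit_cube homot_chain
      homot_simplex_subset_homot_unit_cube sum_abs_lcoef_row sum_abs_lcoef_column
      sum_nonneg_lcoef sum_neg_lcoef lagrange_lower_bound
    unfolding S_def Q_def lam_def l_def by (auto simp: minus_divide_left)
qed

end
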